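(* Let $G$ be an $A$-AW graph with a pendant vertex, and let $t\in T_{V(G)}^{A(G)}(1)$. Then $\overline{G}$ is $N$-AW if and only if $\gcd(1+t,\ell)=1$.
   Context: All graphs are finite and simple; $\overline{G}$ is the complement. Fix an integer $\ell\ge2$; labelings are maps $V(G)\to\mathbb{Z}_\ell$. In the neighborhood Lights Out game, toggling a vertex $w$ adds $1$ (mod $\ell$) to the label of each vertex of the closed neighborhood $N[w]$; in the adjacency Lights Out game, toggling $w$ adds $1$ to the label of each vertex of the open neighborhood $N(w)$. A game is won when all labels are $0$. A graph is $N$-AW (resp. $A$-AW) if every labeling is winnable in the neighborhood (resp. adjacency) game. For $U\subseteq V(G)$ and $r\in\mathbb{Z}_\ell$, $T_U^{A(G)}(r)\subseteq\mathbb{Z}_\ell$ is the set of all $t$ such that the adjacency game on $G$ starting from the labeling that is $r$ on $U$ and $0$ elsewhere can be won with the vertices of $U$ toggled a total of $t$ times (mod $\ell$). The gcd of an element of $\mathbb{Z}_\ell$ with $\ell$ is computed using any integer representative. *)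

theory Defs
  imports "HOL-Number_Theory.Cong"
begin

text \<open>A finite simple graph: finite vertex set V and a symmetric irreflexive
edge relation E on V.  Labelings and toggle counts are int-valued functions,
read modulo l (i.e. elements of Z_l).\<close>

definition simple_graph :: "'a set \<Rightarrow> ('a \<Rightarrow> 'a \<Rightarrow> bool) \<Rightarrow> bool" where
  "simple_graph V E \<longleftrightarrow> finite V \<and> (\<forall>u v. E u v \<longrightarrow> u \<in> V \<and> v \<in> V)
     \<and> (\<forall>u v. E u v \<longrightarrow> E v u) \<and> (\<forall>v. \<not> E v v)"

definition complement_graph :: "'a set \<Rightarrow> ('a \<Rightarrow> 'a \<Rightarrow> bool) \<Rightarrow> 'a \<Rightarrow> 'a \<Rightarrow> bool" where
  "complement_graph V E u v \<longleftrightarrow> u \<in> V \<and> v \<in> V \<and> u \<noteq> v \<and> \<not> E u v"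

definition has_pendant_vertex :: "'a set \<Rightarrow> ('a \<Rightarrow> 'a \<Rightarrow> bool) \<Rightarrow> bool" where
  "has_pendant_vertex V E \<longleftrightarrow> (\<exists>v\<in>V. card {w\<in>V. E v w} = 1)"

text \<open>Adjacency game: toggling w x w times adds x w to every vertex of N(w).
The toggle vector x wins from labeling b.\<close>
definition A_wins :: "int \<Rightarrow> 'a set \<Rightarrow> ('a \<Rightarrow> 'a \<Rightarrow> bool) \<Rightarrow> ('a \<Rightarrow> int) \<Rightarrow> ('a \<Rightarrow> int) \<Rightarrow> bool" where
  "A_wins l V E b x \<longleftrightarrow> (\<forall>v\<in>V. [b v + (\<Sum>w\<in>{w\<in>V. E w v}. x w) = 0] (mod l))"

text \<open>Neighborhood game: toggling w adds to every vertex of N[w].\<close>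
definition N_wins :: "int \<Rightarrow> 'a set \<Rightarrow> ('a \<Rightarrow> 'a \<Rightarrow> bool) \<Rightarrow> ('a \<Rightarrow> int) \<Rightarrow> ('a \<Rightarrow> int) \<Rightarrow> bool" where
  "N_wins l V E b x \<longleftrightarrow> (\<forall>v\<in>V. [b v + (\<Sum>w\<in>{w\<in>V. w = v \<or> E w v}. x w) = 0] (mod l))"

definition A_AW :: "int \<Rightarrow> 'a set \<Rightarrow> ('a \<Rightarrow> 'a \<Rightarrow> bool) \<Rightarrow> bool" where
  "A_AW l V E \<longleftrightarrow> (\<forall>b. \<exists>x. A_wins l V E b x)"

definition N_AW :: "int \<Rightarrow> 'a set \<Rightarrow> ('a \<Rightarrow> 'a \<Rightarrow> bool) \<Rightarrow> bool" where
  "N_AW l V E \<longleftrightarrow> (\<forall>b. \<exists>x. N_wins l V E b x)"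

text \<open>T_U^{A(G)}(r): all t (as integer representatives of Z_l) such that the adjacency
game from the labeling r on U, 0 elsewhere, can be won with the vertices of U toggled
t times in total (mod l).\<close>
definition T_A :: "int \<Rightarrow> 'a set \<Rightarrow> ('a \<Rightarrow> 'a \<Rightarrow> bool) \<Rightarrow> 'a set \<Rightarrow> int \<Rightarrow> int set" where
  "T_A l V E U r = {t. \<exists>x. A_wins l V E (\<lambda>v. if v \<in> U then r else 0) x
                          \<and> [(\<Sum>u\<in>U. x u) = t] (mod l)}"

end

theory Submission
  imports Defs
begin

text \<open>Let A be the adjacency matrix of G and J the all-ones matrix; the neighbourhood game on the
  complement is governed by the symmetric matrix J - A. Fix x with A x = -1 and total t, so that
  (J - A) x = (1 + t) 1 mod l. If 1 + t is invertible mod l and b is any labeling, pick u with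
  A u = b (G is A-AW); then u - (\<Sum>u) (1 + t)\<inverse> x wins the complement game from b.
  If d = gcd (1 + t) l > 1, then (l/d) x lies in the kernel of J - A mod l, so by symmetry every
  winnable labeling is orthogonal to it. As A x = -1, some x v is not divisible by d, and the
  labeling that is 1 at v and 0 elsewhere cannot be won.\<close>

lemma complement_closed_nbhd_sum:
  fixes y :: "'a \<Rightarrow> 'b::ab_group_add"
  assumes "simple_graph V E" "v \<in> V"
  shows "(\<Sum>w\<in>{w\<in>V. w = v \<or> complement_graph V E w v}. y w)
         = (\<Sum>w\<in>V. y w) - (\<Sum>w\<in>{w\<in>V. E w v}. y w)"
proof -
  have "{w\<in>V. w = v \<or> complement_graph V E w v} = V - {w\<in>V. E w v}"
    using assms by (auto simp: complement_graph_def simple_graph_def)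
  moreover have "finite V"
    using assms(1) by (simp add: simple_graph_def)
  ultimately show ?thesis
    by (simp add: sum_diff)
qed

lemma mem_T_A_iff:
  "t \<in> T_A l V E V r \<longleftrightarrow> (\<exists>x. A_wins l V E (\<lambda>_. r) x \<and> [(\<Sum>v\<in>V. x v) = t] (mod l))"
  by (simp add: T_A_def A_wins_def)

lemma complement_closed_nbhd_sum_of_T_A_witness:
  assumes "simple_graph V E" "v \<in> V"
    and "A_wins l V E (\<lambda>_. 1) x" "[(\<Sum>w\<in>V. x w) = t] (mod l)"
  shows "[(\<Sum>w\<in>{w\<in>V. w = v \<or> complement_graph V E w v}. x w) = 1 + t] (mod l)"
proof -
  have "[1 + (\<Sum>w\<in>{w\<in>V. E w v}. x w) = 0] (mod l)"
    using assms(2,3) by (simp add: A_wins_def)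
  then have "[(\<Sum>w\<in>V. x w) - (\<Sum>w\<in>{w\<in>V. E w v}. x w) = t - (-1)] (mod l)"
    using assms(4) by (intro cong_diff) (simp_all add: cong_iff_dvd_diff algebra_simps)
  then show ?thesis
    by (simp add: complement_closed_nbhd_sum[OF assms(1,2)] add.commute)
qed

lemma N_wins_orthogonal_to_kernel:
  fixes y b z :: "'a \<Rightarrow> int"
  assumes "finite V" and sym: "\<And>u w. R u w \<Longrightarrow> R w u"
    and kernel: "\<And>u. u \<in> V \<Longrightarrow> [(\<Sum>w\<in>{w\<in>V. w = u \<or> R w u}. y w) = 0] (mod l)"
    and "N_wins l V R b z"
  shows "[(\<Sum>v\<in>V. y v * b v) = 0] (mod l)"
proof -
  let ?N = "\<lambda>f v. \<Sum>w\<in>{w\<in>V. w = v \<or> R w v}. f w"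
  have swap: "(\<Sum>v\<in>V. y v * ?N z v) = (\<Sum>w\<in>V. z w * ?N y w)"
  proof -
    have "(\<Sum>v\<in>V. y v * ?N z v) = (\<Sum>v\<in>V. \<Sum>w\<in>V. if w = v \<or> R w v then y v * z w else 0)"
      using \<open>finite V\<close> by (simp add: sum.inter_filter sum_distrib_left if_distrib cong: if_cong)
    also have "\<dots> = (\<Sum>w\<in>V. \<Sum>v\<in>V. if v = w \<or> R v w then z w * y v else 0)"
      by (subst sum.swap) (auto intro!: sum.cong dest: sym simp: mult.commute)
    also have "\<dots> = (\<Sum>w\<in>V. z w * ?N y w)"
      using \<open>finite V\<close> by (simp add: sum.inter_filter sum_distrib_left if_distrib cong: if_cong)
    finally show ?thesis .
  qed
  have "[(\<Sum>v\<in>V. y v * (b v + ?N z v)) = (\<Sum>v\<in>V. y v * 0)] (mod l)"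
    using \<open>N_wins l V R b z\<close> by (intro cong_sum cong_scalar_left) (simp add: N_wins_def)
  moreover have "[(\<Sum>w\<in>V. z w * ?N y w) = (\<Sum>w\<in>V. z w * 0)] (mod l)"
    using kernel by (intro cong_sum cong_scalar_left)
  ultimately have "[(\<Sum>v\<in>V. y v * (b v + ?N z v)) - (\<Sum>w\<in>V. z w * ?N y w) = 0 - 0] (mod l)"
    by (intro cong_diff) simp_all
  then show ?thesis
    by (simp add: swap[symmetric] distrib_left sum.distrib)
qed

lemma complement_N_AW_if_coprime:
  assumes "simple_graph V E" "A_AW l V E"
    and x: "A_wins l V E (\<lambda>_. 1) x" "[(\<Sum>w\<in>V. x w) = t] (mod l)"
    and "coprime (1 + t) l"
  shows "N_AW l V (complement_graph V E)"
  unfolding N_AW_def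
proof
  fix b :: "'a \<Rightarrow> int"
  obtain a where a: "[(1 + t) * a = 1] (mod l)"
    using cong_solve_coprime_int[OF \<open>coprime (1 + t) l\<close>] by blast
  obtain u where u: "A_wins l V E (\<lambda>v. - b v) u"
    using \<open>A_AW l V E\<close> by (auto simp: A_AW_def)
  define c where "c = - (\<Sum>w\<in>V. u w) * a"
  have "N_wins l V (complement_graph V E) b (\<lambda>w. u w + c * x w)"
    unfolding N_wins_def
  proof
    fix v assume v: "v \<in> V"
    have "l dvd - b v + (\<Sum>w\<in>{w\<in>V. E w v}. u w)"
      using u v by (simp add: A_wins_def cong_0_iff)
    then have u_v: "[b v - (\<Sum>w\<in>{w\<in>V. E w v}. u w) = 0] (mod l)"
      by (simp add: cong_0_iff dvd_diff_commute)
    have "b v + (\<Sum>w\<in>{w\<in>V. w = v \<or> complement_graph V E w v}. u w + c * x w)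
        = (b v - (\<Sum>w\<in>{w\<in>V. E w v}. u w)) + (\<Sum>w\<in>V. u w)
          + c * (\<Sum>w\<in>{w\<in>V. w = v \<or> complement_graph V E w v}. x w)"
      by (simp add: sum.distrib sum_distrib_left right_diff_distrib
          complement_closed_nbhd_sum[OF \<open>simple_graph V E\<close> v])
    also have "[\<dots> = 0 + (\<Sum>w\<in>V. u w) + c * (1 + t)] (mod l)"
      using u_v complement_closed_nbhd_sum_of_T_A_witness[OF \<open>simple_graph V E\<close> v x]
      by (intro cong_add cong_scalar_left cong_refl)
    also have "0 + (\<Sum>w\<in>V. u w) + c * (1 + t) = (\<Sum>w\<in>V. u w) * (1 - (1 + t) * a)"
      by (simp add: c_def algebra_simps)
    also have "[\<dots> = (\<Sum>w\<in>V. u w) * 0] (mod l)"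
      using a by (intro cong_scalar_left) (simp add: cong_iff_dvd_diff dvd_diff_commute)
    finally show "[b v + (\<Sum>w\<in>{w\<in>V. w = v \<or> complement_graph V E w v}. u w + c * x w) = 0] (mod l)"
      by simp
  qed
  then show "\<exists>y. N_wins l V (complement_graph V E) b y"
    by blast
qed

lemma A_wins_const_one_not_all_dvd:
  assumes "v \<in> V" "A_wins l V E (\<lambda>_. 1) x" "d dvd l" "\<not> is_unit d"
  shows "\<exists>w\<in>V. \<not> d dvd x w"
proof (rule ccontr)
  assume "\<not> (\<exists>w\<in>V. \<not> d dvd x w)"
  then have "d dvd (\<Sum>w\<in>{w\<in>V. E w v}. x w)"
    by (auto intro: dvd_sum)
  moreover have "l dvd 1 + (\<Sum>w\<in>{w\<in>V. E w v}. x w)"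
    using assms(1,2) by (simp add: A_wins_def cong_0_iff)
  then have "d dvd 1 + (\<Sum>w\<in>{w\<in>V. E w v}. x w)"
    using assms(3) by (rule dvd_trans[rotated])
  ultimately have "d dvd 1"
    by (simp add: dvd_add_left_iff)
  then show False
    using \<open>\<not> is_unit d\<close> by simp
qed

lemma complement_not_N_AW_if_not_coprime:
  assumes "simple_graph V E" "v0 \<in> V" "l \<noteq> 0"
    and x: "A_wins l V E (\<lambda>_. 1) x" "[(\<Sum>w\<in>V. x w) = t] (mod l)"
    and "\<not> coprime (1 + t) l"
  shows "\<not> N_AW l V (complement_graph V E)"
proof
  assume "N_AW l V (complement_graph V E)"
  define d where "d = gcd (1 + t) l"
  have "\<not> is_unit d"
    using \<open>\<not> coprime (1 + t) l\<close> by (simp add: d_def coprime_iff_gcd_eq_1)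
  moreover have "d dvd l" "d dvd 1 + t"
    by (simp_all add: d_def)
  ultimately obtain v where v: "v \<in> V" "\<not> d dvd x v"
    using A_wins_const_one_not_all_dvd[OF \<open>v0 \<in> V\<close> x(1)] by blast
  obtain c where l: "l = d * c"
    using \<open>d dvd l\<close> by blast
  have kernel: "[(\<Sum>w\<in>{w\<in>V. w = u \<or> complement_graph V E w u}. c * x w) = 0] (mod l)"
    if "u \<in> V" for u
  proof -
    have "[c * (\<Sum>w\<in>{w\<in>V. w = u \<or> complement_graph V E w u}. x w) = c * (1 + t)] (mod l)"
      using complement_closed_nbhd_sum_of_T_A_witness[OF \<open>simple_graph V E\<close> that x]
      by (rule cong_scalar_left)
    moreover have "[c * (1 + t) = 0] (mod l)"
      using \<open>d dvd 1 + t\<close> by (simp add: l cong_0_iff)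
    ultimately show ?thesis
      by (simp add: sum_distrib_left cong_trans)
  qed
  obtain z where z: "N_wins l V (complement_graph V E) (\<lambda>w. if w = v then 1 else 0) z"
    using \<open>N_AW l V (complement_graph V E)\<close> by (auto simp: N_AW_def)
  have "finite V"
    using assms(1) by (simp add: simple_graph_def)
  have "[(\<Sum>w\<in>V. c * x w * (if w = v then 1 else 0)) = 0] (mod l)"
    using assms(1)
    by (intro N_wins_orthogonal_to_kernel[OF \<open>finite V\<close> _ kernel z])
      (auto simp: simple_graph_def complement_graph_def)
  then have "d * c dvd x v * c"
    using v(1) \<open>finite V\<close> by (simp add: cong_0_iff l if_distrib mult.commute cong: if_cong)
  then show False
    using v(2) \<open>l \<noteq> 0\<close> l by simp
qed

theorem corollary3p7:
  fixes l :: int and V :: "'a set" and E :: "'a \<Rightarrow> 'a \<Rightarrow> bool" and t :: int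
  assumes "l \<ge> 2"
    and "simple_graph V E"
    and "A_AW l V E"
    and "has_pendant_vertex V E"
    and "t \<in> T_A l V E V 1"
  shows "N_AW l V (complement_graph V E) \<longleftrightarrow> gcd (1 + t) l = 1"
proof -
  obtain x where x: "A_wins l V E (\<lambda>_. 1) x" "[(\<Sum>v\<in>V. x v) = t] (mod l)"
    using assms(5) by (auto simp: mem_T_A_iff)
  \<comment> \<open>The pendant vertex only serves to make V nonempty; for V = {} every t lies in T_A.\<close>
  obtain v0 where "v0 \<in> V"
    using assms(4) by (auto simp: has_pendant_vertex_def)
  have "N_AW l V (complement_graph V E) \<longleftrightarrow> coprime (1 + t) l"
    using complement_N_AW_if_coprime[OF assms(2,3) x]
      complement_not_N_AW_if_not_coprime[OF assms(2) \<open>v0 \<in> V\<close> _ x] \<open>l \<ge> 2\<close>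
    by force
  then show ?thesis
    by (simp add: coprime_iff_gcd_eq_1)
qed

end
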